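(* Let $(\mathcal{E}_0,\varnothing,\mathcal{H}_0)\leadsto^n(\mathcal{E}_n,\mathcal{R},\mathcal{H}_n)$ be any run of recording completion for an equational system $\mathcal{E}$ (not necessarily successful). Then for all terms $s,t$ and every join $s\to^*_{\mathcal{R}}\cdot\leftarrow^*_{\mathcal{R}}t$, the recall procedure applied to this join terminates and yields a conversion $s\leftrightarrow^*_{\mathcal{E}}t$, i.e. a conversion between $s$ and $t$ all of whose steps use (in either direction) equations of $\mathcal{E}$ (indices of $\mathcal{E}_0$), apart from trivial steps $t'\stackrel{0}{\approx}t'$.
   Context: Terms are built from a signature $\mathcal{F}$ and an infinite set of variables; $>$ is a reduction order. Rules and equations carry unique natural-number indices; $\stackrel{i}{\to}$ denotes a rewrite step with the rule/equation of index $i$. A state is a triple $(\mathcal{E},\mathcal{R},\mathcal{H})$ of indexed equations, indexed rules and a history of entries $i:s\stackrel{j}{\circ_1}u\stackrel{k}{\circ_2}t$ ($\circ_1,\circ_2\in\{\leftarrow,\to,\approx\}$). In each rule below, $m$ is a fresh index larger than all previously used indices. Inference rules: (deduce) $(\mathcal{E},\mathcal{R},\mathcal{H})\leadsto(\mathcal{E}\cup\{m:s\approx t\},\mathcal{R},\mathcal{H}\cup\{m:s\stackrel{j}{\leftarrow}u\stackrel{k}{\to}t\})$ if $s\stackrel{j}{\leftarrow}_{\mathcal{R}}u\stackrel{k}{\to}_{\mathcal{R}}t$; (orient-left) $(\mathcal{E}\cup\{i:s\approx t\},\mathcal{R},\mathcal{H})\leadsto(\mathcal{E},\mathcal{R}\cup\{i:s\to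 t\},\mathcal{H})$ if $s>t$; (orient-right) $(\mathcal{E}\cup\{i:s\approx t\},\mathcal{R},\mathcal{H}\cup\{i:s\stackrel{j}{\circ_1}u\stackrel{k}{\circ_2}t\})\leadsto(\mathcal{E},\mathcal{R}\cup\{i:t\to s\},\mathcal{H}\cup\{i:t\,(\stackrel{k}{\circ_2})^{-1}\,u\,(\stackrel{j}{\circ_1})^{-1}\,s\})$ if $t>s$; (simplify-left) $(\mathcal{E}\cup\{i:s\approx t\},\mathcal{R},\mathcal{H})\leadsto(\mathcal{E}\cup\{m:u\approx t\},\mathcal{R},\mathcal{H}\cup\{m:u\stackrel{l}{\leftarrow}s\stackrel{i}{\to}t\})$ if $s\stackrel{l}{\to}_{\mathcal{R}}u$; (simplify-right) $(\mathcal{E}\cup\{i:s\approx t\},\mathcal{R},\mathcal{H})\leadsto(\mathcal{E}\cup\{m:s\approx u\},\mathcal{R},\mathcal{H}\cup\{m:s\stackrel{i}{\to}t\stackrel{l}{\to}u\})$ if $t\stackrel{l}{\to}_{\mathcal{R}}u$; (delete) $(\mathcal{E}\cup\{i:s\approx s\},\mathcal{R},\mathcal{H}\cup\{i:s\circ_1v\circ_2s\})\leadsto(\mathcal{E},\mathcal{R},\mathcal{H})$; (compose) $(\mathcal{E},\mathcal{R}\cup\{i:s\to t\},\mathcal{H})\leadsto(\mathcal{E},\mathcal{R}\cup\{m:s\to u\},\mathcal{H}\cup\{m:s\stackrel{i}{\to}t\stackrel{j}{\to}u\})$ if $t\stackrel{j}{\to}_{\mathcal{R}}u$; (collapse) $(\mathcal{E},\mathcal{R}\cup\{i:s\to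 t\},\mathcal{H})\leadsto(\mathcal{E}\cup\{m:u\approx t\},\mathcal{R},\mathcal{H}\cup\{m:u\stackrel{j}{\leftarrow}s\stackrel{i}{\to}t\})$ if $s\stackrel{j}{\to}_{\mathcal{R}}u$. A run for $\mathcal{E}$ is a finite sequence of such steps starting from $\mathcal{E}_0=\{i:s\approx t\mid s\approx t\in\mathcal{E}\}$ (fresh positive index per equation), $\mathcal{R}_0=\varnothing$, $\mathcal{H}_0=\{i:s\stackrel{i}{\to}t\stackrel{0}{\approx}t\mid i:s\approx t\in\mathcal{E}_0\}$. Recall procedure: given a conversion (initially the join), repeatedly pick a step $t_1\stackrel{i}{\to}t_2$ (or its reverse) whose index $i$ is not an index of $\mathcal{E}_0$; for the rule/equation $i:\ell\to r$ there is a history entry $i:\ell\stackrel{j}{\circ_1}u\stackrel{k}{\circ_2}r$ in $\mathcal{H}_n$, and a position $p$ and substitution $\sigma$ with $t_1|_p=\ell\sigma$, $t_2|_p=r\sigma$; replace the step by $t_1\stackrel{j}{\circ_1}t_1[u\sigma]_p\stackrel{k}{\circ_2}t_2$ (reversed accordingly for reversed steps). *)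

theory Defs
  imports Main
begin

datatype ('f, 'v) trm = Var 'v | Fun 'f "('f, 'v) trm list"

type_synonym pos = "nat list"

fun is_pos :: "('f, 'v) trm \<Rightarrow> pos \<Rightarrow> bool" where
  "is_pos t [] = True"
| "is_pos (Var x) (i # p) = False"
| "is_pos (Fun f ts) (i # p) = (i < length ts \<and> is_pos (ts ! i) p)"

fun subt_at :: "('f, 'v) trm \<Rightarrow> pos \<Rightarrow> ('f, 'v) trm" where
  "subt_at t [] = t"
| "subt_at (Var x) (i # p) = Var x"
| "subt_at (Fun f ts) (i # p) = subt_at (ts ! i) p"

fun replace_at :: "('f, 'v) trm \<Rightarrow> pos \<Rightarrow> ('f, 'v) trm \<Rightarrow> ('f, 'v) trm" where
  "replace_at t [] s = s"
| "replace_at (Var x) (i # p) s = Var x"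
| "replace_at (Fun f ts) (i # p) s = Fun f (ts[i := replace_at (ts ! i) p s])"

fun subst :: "('f, 'v) trm \<Rightarrow> ('v \<Rightarrow> ('f, 'v) trm) \<Rightarrow> ('f, 'v) trm" where
  "subst (Var x) \<sigma> = \<sigma> x"
| "subst (Fun f ts) \<sigma> = Fun f (map (\<lambda>t. subst t \<sigma>) ts)"

definition rstep :: "('f, 'v) trm \<times> ('f, 'v) trm \<Rightarrow> ('f, 'v) trm \<Rightarrow> ('f, 'v) trm \<Rightarrow> bool" where
  "rstep lr s u \<longleftrightarrow> (\<exists>p \<sigma>. is_pos s p \<and> subt_at s p = subst (fst lr) \<sigma>
                              \<and> u = replace_at s p (subst (snd lr) \<sigma>))"

definition reduction_order :: "(('f, 'v) trm \<Rightarrow> ('f, 'v) trm \<Rightarrow> bool) \<Rightarrow> bool" where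
  "reduction_order gt \<longleftrightarrow>
     (\<forall>s. \<not> gt s s) \<and> transp gt \<and> wfP (\<lambda>x y. gt y x) \<and>
     (\<forall>s t \<sigma>. gt s t \<longrightarrow> gt (subst s \<sigma>) (subst t \<sigma>)) \<and>
     (\<forall>s t f ss ts. gt s t \<longrightarrow> gt (Fun f (ss @ s # ts)) (Fun f (ss @ t # ts)))"

datatype dir = Fw | Bw | Eq   \<comment> \<open>\<rightarrow>, \<leftarrow>, \<approx>\<close>

fun inv_dir :: "dir \<Rightarrow> dir" where
  "inv_dir Fw = Bw" | "inv_dir Bw = Fw" | "inv_dir Eq = Eq"

type_synonym ('f, 'v) ieq = "nat \<times> ('f, 'v) trm \<times> ('f, 'v) trm"

text \<open>HE i s o1 j u o2 k t  represents the history entry  i: s o1^j u o2^k t.\<close>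
datatype ('f, 'v) hentry = HE nat "('f, 'v) trm" dir nat "('f, 'v) trm" dir nat "('f, 'v) trm"

type_synonym ('f, 'v) state = "('f, 'v) ieq set \<times> ('f, 'v) ieq set \<times> ('f, 'v) hentry set"

definition rstep_idx :: "('f, 'v) ieq set \<Rightarrow> nat \<Rightarrow> ('f, 'v) trm \<Rightarrow> ('f, 'v) trm \<Rightarrow> bool" where
  "rstep_idx R j s u \<longleftrightarrow> (\<exists>l r. (j, l, r) \<in> R \<and> rstep (l, r) s u)"

fun hentry_idxs :: "('f, 'v) hentry \<Rightarrow> nat set" where
  "hentry_idxs (HE i s o1 j u o2 k t) = {i, j, k}"

text \<open>All indices used in a state (0 is always considered used, as the trivial index).\<close>
fun used_idxs :: "('f, 'v) state \<Rightarrow> nat set" where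
  "used_idxs (E, R, H) = insert 0 (fst ` E \<union> fst ` R \<union> \<Union> (hentry_idxs ` H))"

text \<open>One inference step of recording completion; m is the fresh index (used by the
  rules that create a new index).\<close>
inductive cstep :: "(('f, 'v) trm \<Rightarrow> ('f, 'v) trm \<Rightarrow> bool) \<Rightarrow> nat \<Rightarrow>
    ('f, 'v) state \<Rightarrow> ('f, 'v) state \<Rightarrow> bool" for gt where
  deduce: "rstep_idx R j u s \<Longrightarrow> rstep_idx R k u t \<Longrightarrow>
    cstep gt m (E, R, H) (E \<union> {(m, s, t)}, R, H \<union> {HE m s Bw j u Fw k t})"
| orient_left: "(i, s, t) \<in> E \<Longrightarrow> gt s t \<Longrightarrow>
    cstep gt m (E, R, H) (E - {(i, s, t)}, R \<union> {(i, s, t)}, H)"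
| orient_right: "(i, s, t) \<in> E \<Longrightarrow> HE i s o1 j u o2 k t \<in> H \<Longrightarrow> gt t s \<Longrightarrow>
    cstep gt m (E, R, H) (E - {(i, s, t)}, R \<union> {(i, t, s)},
      (H - {HE i s o1 j u o2 k t}) \<union> {HE i t (inv_dir o2) k u (inv_dir o1) j s})"
| simplify_left: "(i, s, t) \<in> E \<Longrightarrow> rstep_idx R l s u \<Longrightarrow>
    cstep gt m (E, R, H) ((E - {(i, s, t)}) \<union> {(m, u, t)}, R, H \<union> {HE m u Bw l s Fw i t})"
| simplify_right: "(i, s, t) \<in> E \<Longrightarrow> rstep_idx R l t u \<Longrightarrow>
    cstep gt m (E, R, H) ((E - {(i, s, t)}) \<union> {(m, s, u)}, R, H \<union> {HE m s Fw i t Fw l u})"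
| delete: "(i, s, s) \<in> E \<Longrightarrow> HE i s o1 j v o2 k s \<in> H \<Longrightarrow>
    cstep gt m (E, R, H) (E - {(i, s, s)}, R, H - {HE i s o1 j v o2 k s})"
| compose: "(i, s, t) \<in> R \<Longrightarrow> rstep_idx (R - {(i, s, t)}) j t u \<Longrightarrow>
    cstep gt m (E, R, H) (E, (R - {(i, s, t)}) \<union> {(m, s, u)}, H \<union> {HE m s Fw i t Fw j u})"
| collapse: "(i, s, t) \<in> R \<Longrightarrow> rstep_idx (R - {(i, s, t)}) j s u \<Longrightarrow>
    cstep gt m (E, R, H) (E \<union> {(m, u, t)}, R - {(i, s, t)}, H \<union> {HE m u Bw j s Fw i t})"

definition init_eqs :: "(('f, 'v) trm \<times> ('f, 'v) trm) set \<Rightarrow> ('f, 'v) ieq set \<Rightarrow> bool" where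
  "init_eqs E E0 \<longleftrightarrow> snd ` E0 = E \<and> inj_on fst E0 \<and> inj_on snd E0 \<and> 0 \<notin> fst ` E0"

definition init_hist :: "('f, 'v) ieq set \<Rightarrow> ('f, 'v) hentry set" where
  "init_hist E0 = {HE i s Fw i t Eq 0 t | i s t. (i, s, t) \<in> E0}"

definition run :: "(('f, 'v) trm \<Rightarrow> ('f, 'v) trm \<Rightarrow> bool) \<Rightarrow> ('f, 'v) ieq set \<Rightarrow>
    ('f, 'v) state list \<Rightarrow> bool" where
  "run gt E0 ss \<longleftrightarrow> ss \<noteq> [] \<and> ss ! 0 = (E0, {}, init_hist E0) \<and>
     (\<forall>k < length ss - 1. \<exists>m. (\<forall>l \<le> k. \<forall>x \<in> used_idxs (ss ! l). x < m) \<and>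
                               cstep gt m (ss ! k) (ss ! Suc k))"

type_synonym ('f, 'v) conv = "('f, 'v) trm \<times> (dir \<times> nat \<times> ('f, 'v) trm) list"

fun conv_steps :: "('f, 'v) trm \<Rightarrow> (dir \<times> nat \<times> ('f, 'v) trm) list \<Rightarrow>
    (('f, 'v) trm \<times> dir \<times> nat \<times> ('f, 'v) trm) list" where
  "conv_steps s [] = []"
| "conv_steps s ((d, i, t) # xs) = (s, d, i, t) # conv_steps t xs"

fun conv_last :: "('f, 'v) trm \<Rightarrow> (dir \<times> nat \<times> ('f, 'v) trm) list \<Rightarrow> ('f, 'v) trm" where
  "conv_last s [] = s"
| "conv_last s ((d, i, t) # xs) = conv_last t xs"

definition conv_end :: "('f, 'v) conv \<Rightarrow> ('f, 'v) trm" where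
  "conv_end c = conv_last (fst c) (snd c)"

fun R_step :: "('f, 'v) ieq set \<Rightarrow> ('f, 'v) trm \<times> dir \<times> nat \<times> ('f, 'v) trm \<Rightarrow> bool" where
  "R_step R (t1, d, i, t2) \<longleftrightarrow>
     (d = Fw \<and> rstep_idx R i t1 t2) \<or> (d = Bw \<and> rstep_idx R i t2 t1)"

definition is_join :: "('f, 'v) ieq set \<Rightarrow> ('f, 'v) trm \<Rightarrow> ('f, 'v) trm \<Rightarrow> ('f, 'v) conv \<Rightarrow> bool" where
  "is_join R s t c \<longleftrightarrow> fst c = s \<and> conv_end c = t \<and>
     (\<exists>fw bw. snd c = fw @ bw \<and> (\<forall>x \<in> set fw. fst x = Fw) \<and> (\<forall>x \<in> set bw. fst x = Bw)) \<and>
     (\<forall>st \<in> set (conv_steps (fst c) (snd c)). R_step R st)"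

text \<open>One step of the recall procedure, w.r.t. the set I of indices of E0 and the final
  history H. A step t1 \<rightarrow>^i t2 (i not in I) with history entry i: l o1^j u o2^k r and
  t1|_p = l\<sigma>, t2 = t1[r\<sigma>]_p is replaced by t1 o1^j t1[u\<sigma>]_p o2^k t2; reversed steps
  are treated symmetrically.\<close>
definition recall_step :: "nat set \<Rightarrow> ('f, 'v) hentry set \<Rightarrow> ('f, 'v) conv \<Rightarrow> ('f, 'v) conv \<Rightarrow> bool" where
  "recall_step I H c c' \<longleftrightarrow> fst c' = fst c \<and>
     (\<exists>pre d i t2 post l o1 j u o2 k r p \<sigma>.
        snd c = pre @ (d, i, t2) # post \<and> i \<notin> I \<and> HE i l o1 j u o2 k r \<in> H \<and>
        (let t1 = conv_last (fst c) pre in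
          (d = Fw \<and> is_pos t1 p \<and> subt_at t1 p = subst l \<sigma> \<and>
             t2 = replace_at t1 p (subst r \<sigma>) \<and>
             snd c' = pre @ (o1, j, replace_at t1 p (subst u \<sigma>)) # (o2, k, t2) # post)
        \<or> (d = Bw \<and> is_pos t2 p \<and> subt_at t2 p = subst l \<sigma> \<and>
             t1 = replace_at t2 p (subst r \<sigma>) \<and>
             snd c' = pre @ (inv_dir o2, k, replace_at t2 p (subst u \<sigma>)) # (inv_dir o1, j, t2) # post)))"

fun E_step :: "('f, 'v) ieq set \<Rightarrow> ('f, 'v) trm \<times> dir \<times> nat \<times> ('f, 'v) trm \<Rightarrow> bool" where
  "E_step E0 (t1, d, i, t2) \<longleftrightarrow>
     (i = 0 \<and> d = Eq \<and> t1 = t2) \<or>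
     (\<exists>l r. (i, l, r) \<in> E0 \<and> (rstep (l, r) t1 t2 \<or> rstep (l, r) t2 t1))"

end

theory Submission
  imports Defs
begin

text \<open>Along a run we maintain an invariant: every equation or rule whose index i is not an index
  of E0 has a history entry i: l o1^j u o2^k r whose two steps are themselves justified, with
  j, k < i, and no history entry other than its own refers to an equation. The last condition
  makes orient-right (which reverses an entry) and delete (which drops one) harmless. Recall
  replaces a step of index i by two steps of smaller indices, so the weight \<Sum> 3^i of a
  conversion decreases, and in a normal form no step of an index outside E0 is left.\<close>

lemma subst_Var [simp]: "subst t Var = t"
  by (induction t) (auto simp: map_idI)

lemma subst_subst: "subst (subst t \<sigma>) \<tau> = subst t (\<lambda>x. subst (\<sigma> x) \<tau>)"
  by (induction t) auto

lemma subst_pos: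
  "is_pos t q \<Longrightarrow> is_pos (subst t \<sigma>) q \<and> subt_at (subst t \<sigma>) q = subst (subt_at t q) \<sigma>
     \<and> replace_at (subst t \<sigma>) q (subst s \<sigma>) = subst (replace_at t q s) \<sigma>"
  by (induction t q rule: is_pos.induct) (auto simp: map_update)

lemma replace_at_pos_append:
  "is_pos t p \<Longrightarrow> is_pos (replace_at t p s) (p @ q) = is_pos s q
     \<and> subt_at (replace_at t p s) (p @ q) = subt_at s q
     \<and> replace_at (replace_at t p s) (p @ q) u = replace_at t p (replace_at s q u)"
  by (induction t p rule: is_pos.induct) auto

lemma replace_at_subt_at: "is_pos t p \<Longrightarrow> replace_at t p (subt_at t p) = t"
  by (induction t p rule: is_pos.induct) auto

lemma rstep_rule: "rstep (l, r) l r"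
  unfolding rstep_def by (intro exI[of _ "[]"] exI[of _ Var]) auto

lemma rstep_converse:
  assumes "rstep (l, r) a b"
  shows "rstep (r, l) b a"
proof -
  obtain p \<sigma> where p: "is_pos a p" "subt_at a p = subst l \<sigma>" "b = replace_at a p (subst r \<sigma>)"
    using assms unfolding rstep_def by auto
  have "is_pos b p" "subt_at b p = subst r \<sigma>" "replace_at b p (subst l \<sigma>) = a"
    using replace_at_pos_append[OF p(1), of "subst r \<sigma>" "[]"] p replace_at_subt_at[OF p(1)] by auto
  then show ?thesis unfolding rstep_def by auto
qed

lemma rstep_ctxt_subst:
  assumes "rstep (l, r) a b" and C: "is_pos C p"
  shows "rstep (l, r) (replace_at C p (subst a \<sigma>)) (replace_at C p (subst b \<sigma>))"
proof -
  obtain q \<tau> where q: "is_pos a q" "subt_at a q = subst l \<tau>" "b = replace_at a q (subst r \<tau>)"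
    using assms(1) unfolding rstep_def by auto
  have "is_pos (subst a \<sigma>) q" "subt_at (subst a \<sigma>) q = subst l (\<lambda>x. subst (\<tau> x) \<sigma>)"
    "subst b \<sigma> = replace_at (subst a \<sigma>) q (subst r (\<lambda>x. subst (\<tau> x) \<sigma>))"
    using subst_pos[OF q(1), of \<sigma> "subst r \<tau>"] q by (auto simp: subst_subst)
  with replace_at_pos_append[OF C, of "subst a \<sigma>" q] show ?thesis unfolding rstep_def
    by (intro exI[of _ "p @ q"] exI[of _ "\<lambda>x. subst (\<tau> x) \<sigma>"]) auto
qed

text \<open>For an index of E0 the direction label is irrelevant; for any other index it must match
  the orientation of the history entry, as the recall procedure requires.\<close>
definition justified ::
    "('f, 'v) ieq set \<Rightarrow> ('f, 'v) hentry set \<Rightarrow> ('f, 'v) trm \<Rightarrow> dir \<Rightarrow> nat \<Rightarrow> ('f, 'v) trm \<Rightarrow> bool" where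
  "justified E0 H a d i b \<longleftrightarrow> (i = 0 \<and> d = Eq \<and> a = b) \<or>
     (i \<in> fst ` E0 \<and> (\<exists>l r. (i, l, r) \<in> E0 \<and> (rstep (l, r) a b \<or> rstep (l, r) b a))) \<or>
     (i \<notin> fst ` E0 \<and> (\<exists>l o1 j u o2 k r. HE i l o1 j u o2 k r \<in> H \<and>
        ((d = Fw \<and> rstep (l, r) a b) \<or> (d = Bw \<and> rstep (l, r) b a))))"

lemma justified_inv_dir: "justified E0 H a d i b \<longleftrightarrow> justified E0 H b (inv_dir d) i a"
  by (cases d) (auto simp: justified_def)

lemma justified_mono: "justified E0 H a d i b \<Longrightarrow> H \<subseteq> H' \<Longrightarrow> justified E0 H' a d i b"
  unfolding justified_def by (smt (verit) subsetD)

lemma justified_remove: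
  "justified E0 H a d y b \<Longrightarrow> y \<noteq> i \<Longrightarrow> justified E0 (H - {HE i l o1 j u o2 k r}) a d y b"
  unfolding justified_def by auto

lemma justified_ctxt_subst:
  "justified E0 H a d i b \<Longrightarrow> is_pos C p \<Longrightarrow>
     justified E0 H (replace_at C p (subst a \<sigma>)) d i (replace_at C p (subst b \<sigma>))"
  unfolding justified_def using rstep_ctxt_subst by metis

locale recording_inv =
  fixes E0 E R :: "('f, 'v) ieq set" and H :: "('f, 'v) hentry set"
  assumes idx_inj: "inj_on fst (E \<union> R)"
    and idx_disjoint: "fst ` E \<inter> fst ` R = {}"
    and E0_idx: "\<And>i l r. (i, l, r) \<in> E \<union> R \<Longrightarrow> i \<in> fst ` E0 \<Longrightarrow> (i, l, r) \<in> E0 \<or> (i, r, l) \<in> E0"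
    and recorded: "\<And>i l r. (i, l, r) \<in> E \<union> R \<Longrightarrow> i \<notin> fst ` E0 \<Longrightarrow> \<exists>o1 j u o2 k. HE i l o1 j u o2 k r \<in> H"
    and hist_justified: "\<And>i l o1 j u o2 k r. HE i l o1 j u o2 k r \<in> H \<Longrightarrow> i \<notin> fst ` E0 \<Longrightarrow>
       justified E0 H l o1 j u \<and> justified E0 H u o2 k r \<and> j < i \<and> k < i"
    and eq_unreferenced: "\<And>i s t x l o1 j u o2 k r. (i, s, t) \<in> E \<Longrightarrow> HE x l o1 j u o2 k r \<in> H \<Longrightarrow>
       x \<noteq> i \<Longrightarrow> j \<noteq> i \<and> k \<noteq> i"
begin

lemma idx_unique: "(i, s, t) \<in> E \<union> R \<Longrightarrow> (i, s', t') \<in> E \<union> R \<Longrightarrow> s' = s \<and> t' = t"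
  using inj_onD[OF idx_inj] by fastforce

lemma idx_ne_if_other: "(i, s, t) \<in> E \<union> R \<Longrightarrow> (x, s', t') \<in> (E \<union> R) - {(i, s, t)} \<Longrightarrow> i \<noteq> x"
  using idx_unique by blast

lemma idx_ne_if_E_R: "y \<in> fst ` R \<Longrightarrow> (x, s, t) \<in> E \<Longrightarrow> y \<noteq> x"
  using idx_disjoint by force

lemma rule_justified: "(y, l, r) \<in> E \<union> R \<Longrightarrow> rstep (l, r) a b \<Longrightarrow>
    justified E0 H a Fw y b \<and> justified E0 H b Bw y a"
  using E0_idx recorded rstep_converse unfolding justified_def
  by (smt (verit) dir.distinct(1) image_eqI fst_conv)

lemma rstep_idx_justified: "rstep_idx R y a b \<Longrightarrow>
    justified E0 H a Fw y b \<and> justified E0 H b Bw y a \<and> y \<in> fst ` R"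
  unfolding rstep_idx_def using rule_justified by (metis UnI2 fst_conv image_eqI)

end

lemma fresh_idx:
  assumes "\<forall>x \<in> used_idxs (E, R, H). x < m"
  shows "\<And>i l r. (i, l, r) \<in> E \<Longrightarrow> i < m" "\<And>i l r. (i, l, r) \<in> R \<Longrightarrow> i < m"
    "\<And>i l o1 j u o2 k r. HE i l o1 j u o2 k r \<in> H \<Longrightarrow> i < m \<and> j < m \<and> k < m"
  using assms by (auto; force)+

lemma (in recording_inv) add_fresh_preserves:
  assumes fresh: "\<forall>x \<in> used_idxs (E, R, H). x < m" and fresh_E0: "\<forall>x \<in> fst ` E0. x < m"
    and sE: "E' \<subseteq> insert (m, a, b) E" and sR: "R' \<subseteq> insert (m, a, b) R"
    and mem: "(m, a, b) \<in> E' \<union> R'" and not_both: "\<not> ((m, a, b) \<in> E' \<and> (m, a, b) \<in> R')"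
    and j1: "justified E0 H a o1 j u" and j2: "justified E0 H u o2 k b" and jk: "j < m" "k < m"
    and unref: "\<And>x s' t'. (x, s', t') \<in> E' \<Longrightarrow> x \<noteq> m \<Longrightarrow> j \<noteq> x \<and> k \<noteq> x"
  shows "recording_inv E0 E' R' (H \<union> {HE m a o1 j u o2 k b})"
proof -
  note F = fresh_idx[OF fresh]
  let ?H' = "H \<union> {HE m a o1 j u o2 k b}"
  have mE: "m \<notin> fst ` E" "m \<notin> fst ` R" using F(1,2) by (metis imageE less_irrefl prod.collapse)+
  have sub: "E' \<union> R' \<subseteq> insert (m, a, b) (E \<union> R)" using sE sR by blast
  show ?thesis
  proof
    have "inj_on fst (insert (m, a, b) (E \<union> R))" using idx_inj mE by (auto simp: inj_on_insert)
    then show "inj_on fst (E' \<union> R')" using sub by (rule inj_on_subset)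
    have "fst ` E' \<subseteq> insert m (fst ` E)" "fst ` R' \<subseteq> insert m (fst ` R)" using sE sR by force+
    moreover have "m \<notin> fst ` E' \<or> m \<notin> fst ` R'"
    proof (rule ccontr)
      assume "\<not> ?thesis"
      then obtain a1 b1 a2 b2 where in_E': "(m, a1, b1) \<in> E'" and in_R': "(m, a2, b2) \<in> R'" by force
      then have "(m, a1, b1) = (m, a, b)" "(m, a2, b2) = (m, a, b)" using sE sR mE by force+
      then show False using not_both in_E' in_R' by simp
    qed
    ultimately show "fst ` E' \<inter> fst ` R' = {}" using idx_disjoint by blast
  next
    fix x l r assume "(x, l, r) \<in> E' \<union> R'" "x \<in> fst ` E0"
    then show "(x, l, r) \<in> E0 \<or> (x, r, l) \<in> E0" using E0_idx fresh_E0 sub by blast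
  next
    fix x l r assume "(x, l, r) \<in> E' \<union> R'" "x \<notin> fst ` E0"
    then show "\<exists>o1 j u o2 k. HE x l o1 j u o2 k r \<in> ?H'" using recorded sub by blast
  next
    fix i l p1 j' u' p2 k' r assume "HE i l p1 j' u' p2 k' r \<in> ?H'" "i \<notin> fst ` E0"
    moreover have "justified E0 ?H' a d y b" if "justified E0 H a d y b" for a d y b
      using that justified_mono by blast
    ultimately show "justified E0 ?H' l p1 j' u' \<and> justified E0 ?H' u' p2 k' r \<and> j' < i \<and> k' < i"
      using hist_justified j1 j2 jk by blast
  next
    fix i s' t' x l p1 j' u' p2 k' r
    assume a: "(i, s', t') \<in> E'" "HE x l p1 j' u' p2 k' r \<in> ?H'" "x \<noteq> i"
    show "j' \<noteq> i \<and> k' \<noteq> i"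
    proof (cases "HE x l p1 j' u' p2 k' r \<in> H")
      case True
      then show ?thesis using a sE eq_unreferenced F(3) by blast
    next
      case False
      then show ?thesis using a unref by auto
    qed
  qed
qed

lemma (in recording_inv) deduce_preserves:
  assumes fresh: "\<forall>x \<in> used_idxs (E, R, H). x < m" and fresh_E0: "\<forall>x \<in> fst ` E0. x < m"
    and j: "rstep_idx R j u s" and k: "rstep_idx R k u t"
  shows "recording_inv E0 (E \<union> {(m, s, t)}) R (H \<union> {HE m s Bw j u Fw k t})"
proof (rule add_fresh_preserves[OF fresh fresh_E0])
  have jR: "j \<in> fst ` R" and kR: "k \<in> fst ` R"
    using rstep_idx_justified j k by auto
  show "justified E0 H s Bw j u" "justified E0 H u Fw k t"
    using rstep_idx_justified j k by auto
  show "j < m" "k < m" using jR kR fresh_idx(2)[OF fresh] by force+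
  show "\<not> ((m, s, t) \<in> E \<union> {(m, s, t)} \<and> (m, s, t) \<in> R)" using fresh_idx(2)[OF fresh] by blast
  show "\<And>x s' t'. (x, s', t') \<in> E \<union> {(m, s, t)} \<Longrightarrow> x \<noteq> m \<Longrightarrow> j \<noteq> x \<and> k \<noteq> x"
    using idx_ne_if_E_R jR kR by blast
qed auto

lemma (in recording_inv) simplify_left_preserves:
  assumes fresh: "\<forall>x \<in> used_idxs (E, R, H). x < m" and fresh_E0: "\<forall>x \<in> fst ` E0. x < m"
    and e: "(i, s, t) \<in> E" and l: "rstep_idx R l s u"
  shows "recording_inv E0 ((E - {(i, s, t)}) \<union> {(m, u, t)}) R (H \<union> {HE m u Bw l s Fw i t})"
proof (rule add_fresh_preserves[OF fresh fresh_E0])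
  have lR: "l \<in> fst ` R" using rstep_idx_justified l by auto
  show "justified E0 H u Bw l s" using rstep_idx_justified l by auto
  show "justified E0 H s Fw i t" using rule_justified[OF _ rstep_rule] e by blast
  show "l < m" using lR fresh_idx(2)[OF fresh] by force
  show "i < m" using fresh_idx(1)[OF fresh] e by blast
  show "\<not> ((m, u, t) \<in> E - {(i, s, t)} \<union> {(m, u, t)} \<and> (m, u, t) \<in> R)"
    using fresh_idx(2)[OF fresh] by blast
  show "\<And>x s' t'. (x, s', t') \<in> E - {(i, s, t)} \<union> {(m, u, t)} \<Longrightarrow> x \<noteq> m \<Longrightarrow> l \<noteq> x \<and> i \<noteq> x"
    using idx_ne_if_E_R[OF lR] idx_ne_if_other e by blast
qed auto

lemma (in recording_inv) simplify_right_preserves: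
  assumes fresh: "\<forall>x \<in> used_idxs (E, R, H). x < m" and fresh_E0: "\<forall>x \<in> fst ` E0. x < m"
    and e: "(i, s, t) \<in> E" and l: "rstep_idx R l t u"
  shows "recording_inv E0 ((E - {(i, s, t)}) \<union> {(m, s, u)}) R (H \<union> {HE m s Fw i t Fw l u})"
proof (rule add_fresh_preserves[OF fresh fresh_E0])
  have lR: "l \<in> fst ` R" using rstep_idx_justified l by auto
  show "justified E0 H t Fw l u" using rstep_idx_justified l by auto
  show "justified E0 H s Fw i t" using rule_justified[OF _ rstep_rule] e by blast
  show "l < m" using lR fresh_idx(2)[OF fresh] by force
  show "i < m" using fresh_idx(1)[OF fresh] e by blast
  show "\<not> ((m, s, u) \<in> E - {(i, s, t)} \<union> {(m, s, u)} \<and> (m, s, u) \<in> R)"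
    using fresh_idx(2)[OF fresh] by blast
  show "\<And>x s' t'. (x, s', t') \<in> E - {(i, s, t)} \<union> {(m, s, u)} \<Longrightarrow> x \<noteq> m \<Longrightarrow> i \<noteq> x \<and> l \<noteq> x"
    using idx_ne_if_E_R[OF lR] idx_ne_if_other e by blast
qed auto

lemma (in recording_inv) compose_preserves:
  assumes fresh: "\<forall>x \<in> used_idxs (E, R, H). x < m" and fresh_E0: "\<forall>x \<in> fst ` E0. x < m"
    and e: "(i, s, t) \<in> R" and j: "rstep_idx (R - {(i, s, t)}) j t u"
  shows "recording_inv E0 E ((R - {(i, s, t)}) \<union> {(m, s, u)}) (H \<union> {HE m s Fw i t Fw j u})"
proof (rule add_fresh_preserves[OF fresh fresh_E0])
  have j: "rstep_idx R j t u" using j unfolding rstep_idx_def by blast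
  have jR: "j \<in> fst ` R" using rstep_idx_justified j by auto
  show "justified E0 H t Fw j u" using rstep_idx_justified j by auto
  show "justified E0 H s Fw i t" using rule_justified[OF _ rstep_rule] e by blast
  show "j < m" using jR fresh_idx(2)[OF fresh] by force
  show "i < m" using fresh_idx(2)[OF fresh] e by blast
  show "\<not> ((m, s, u) \<in> E \<and> (m, s, u) \<in> R - {(i, s, t)} \<union> {(m, s, u)})"
    using fresh_idx(1)[OF fresh] by blast
  show "\<And>x s' t'. (x, s', t') \<in> E \<Longrightarrow> x \<noteq> m \<Longrightarrow> i \<noteq> x \<and> j \<noteq> x"
    using idx_ne_if_E_R jR e by force
qed auto

lemma (in recording_inv) collapse_preserves:
  assumes fresh: "\<forall>x \<in> used_idxs (E, R, H). x < m" and fresh_E0: "\<forall>x \<in> fst ` E0. x < m"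
    and e: "(i, s, t) \<in> R" and j: "rstep_idx (R - {(i, s, t)}) j s u"
  shows "recording_inv E0 (E \<union> {(m, u, t)}) (R - {(i, s, t)}) (H \<union> {HE m u Bw j s Fw i t})"
proof (rule add_fresh_preserves[OF fresh fresh_E0])
  have j: "rstep_idx R j s u" using j unfolding rstep_idx_def by blast
  have jR: "j \<in> fst ` R" using rstep_idx_justified j by auto
  show "justified E0 H u Bw j s" using rstep_idx_justified j by auto
  show "justified E0 H s Fw i t" using rule_justified[OF _ rstep_rule] e by blast
  show "j < m" using jR fresh_idx(2)[OF fresh] by force
  show "i < m" using fresh_idx(2)[OF fresh] e by blast
  show "\<not> ((m, u, t) \<in> E \<union> {(m, u, t)} \<and> (m, u, t) \<in> R - {(i, s, t)})"
    using fresh_idx(2)[OF fresh] by blast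
  show "\<And>x s' t'. (x, s', t') \<in> E \<union> {(m, u, t)} \<Longrightarrow> x \<noteq> m \<Longrightarrow> j \<noteq> x \<and> i \<noteq> x"
    using idx_ne_if_E_R jR e by force
qed auto

lemma (in recording_inv) orient_left_preserves:
  assumes e: "(i, s, t) \<in> E"
  shows "recording_inv E0 (E - {(i, s, t)}) (R \<union> {(i, s, t)}) H"
proof
  have U: "(E - {(i, s, t)}) \<union> (R \<union> {(i, s, t)}) = E \<union> R" using e by auto
  have "i \<notin> fst ` (E - {(i, s, t)})" using idx_ne_if_other e by force
  then show "fst ` (E - {(i, s, t)}) \<inter> fst ` (R \<union> {(i, s, t)}) = {}" using idx_disjoint by auto
  show "inj_on fst ((E - {(i, s, t)}) \<union> (R \<union> {(i, s, t)}))" unfolding U by (fact idx_inj)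
  show "\<And>x l r. (x, l, r) \<in> (E - {(i, s, t)}) \<union> (R \<union> {(i, s, t)}) \<Longrightarrow> x \<in> fst ` E0 \<Longrightarrow>
      (x, l, r) \<in> E0 \<or> (x, r, l) \<in> E0"
    unfolding U by (fact E0_idx)
  show "\<And>x l r. (x, l, r) \<in> (E - {(i, s, t)}) \<union> (R \<union> {(i, s, t)}) \<Longrightarrow> x \<notin> fst ` E0 \<Longrightarrow>
      \<exists>o1 j u o2 k. HE x l o1 j u o2 k r \<in> H"
    unfolding U by (fact recorded)
qed (use hist_justified eq_unreferenced in blast)+

text \<open>Reversing entry i is sound because, i being an equation, no other entry refers to i.\<close>
lemma (in recording_inv) orient_right_preserves:
  assumes e: "(i, s, t) \<in> E" and h: "HE i s o1 j u o2 k t \<in> H"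
  shows "recording_inv E0 (E - {(i, s, t)}) (R \<union> {(i, t, s)})
      ((H - {HE i s o1 j u o2 k t}) \<union> {HE i t (inv_dir o2) k u (inv_dir o1) j s})"
    (is "recording_inv E0 ?E ?R ?H")
proof -
  have iR: "i \<notin> fst ` R" using idx_disjoint e by force
  have iE: "i \<notin> fst ` ?E" using idx_ne_if_other e by force
  have U: "?E \<union> ?R = insert (i, t, s) ((E \<union> R) - {(i, s, t)})" using iR by force
  have keep: "justified E0 ?H a d y b" if "y \<noteq> i" "justified E0 H a d y b" for a d y b
    using that justified_remove justified_mono by (metis Un_upper1)
  show ?thesis
  proof
    have "inj_on fst ((E \<union> R) - {(i, s, t)})" using idx_inj by (rule inj_on_subset) auto
    moreover have "i \<notin> fst ` ((E \<union> R) - {(i, s, t)})" using iE iR by auto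
    ultimately show "inj_on fst (?E \<union> ?R)" unfolding U inj_on_insert by auto
    show "fst ` ?E \<inter> fst ` ?R = {}" using idx_disjoint iE by auto
  next
    fix x l r assume "(x, l, r) \<in> ?E \<union> ?R" "x \<in> fst ` E0"
    then show "(x, l, r) \<in> E0 \<or> (x, r, l) \<in> E0" using E0_idx[of i s t] E0_idx e unfolding U by blast
  next
    fix x l r assume a: "(x, l, r) \<in> ?E \<union> ?R" "x \<notin> fst ` E0"
    show "\<exists>o1 j u o2 k. HE x l o1 j u o2 k r \<in> ?H"
    proof (cases "(x, l, r) = (i, t, s)")
      case False
      then have other: "(x, l, r) \<in> E \<union> R - {(i, s, t)}" using a(1) unfolding U by blast
      then have "x \<noteq> i" using idx_ne_if_other e by blast
      with recorded[OF DiffD1[OF other] a(2)] show ?thesis by blast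
    qed blast
  next
    fix y l p1 j1 u1 p2 k1 r assume a: "HE y l p1 j1 u1 p2 k1 r \<in> ?H" "y \<notin> fst ` E0"
    show "justified E0 ?H l p1 j1 u1 \<and> justified E0 ?H u1 p2 k1 r \<and> j1 < y \<and> k1 < y"
    proof (cases "HE y l p1 j1 u1 p2 k1 r = HE i t (inv_dir o2) k u (inv_dir o1) j s")
      case True
      then have eq: "y = i" "l = t" "p1 = inv_dir o2" "j1 = k" "u1 = u" "p2 = inv_dir o1" "k1 = j" "r = s"
        by auto
      have old: "justified E0 H s o1 j u" "justified E0 H u o2 k t" "j < i" "k < i"
        using hist_justified[OF h] a eq by auto
      then have "justified E0 H t (inv_dir o2) k u" "justified E0 H u (inv_dir o1) j s"
        using justified_inv_dir by (metis inv_dir.elims)+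
      then show ?thesis unfolding eq using old(3,4) keep[of k] keep[of j] by simp
    next
      case False
      then have hH: "HE y l p1 j1 u1 p2 k1 r \<in> H" using a by auto
      have old: "justified E0 H l p1 j1 u1" "justified E0 H u1 p2 k1 r" "j1 < y" "k1 < y"
        using hist_justified[OF hH a(2)] by auto
      moreover have "j1 \<noteq> i \<and> k1 \<noteq> i"
        using old eq_unreferenced[OF e hH] by (cases "y = i") auto
      ultimately show ?thesis using keep by auto
    qed
  next
    fix x s' t' y l p1 j1 u1 p2 k1 r
    assume "(x, s', t') \<in> ?E" "HE y l p1 j1 u1 p2 k1 r \<in> ?H" "y \<noteq> x"
    then show "j1 \<noteq> x \<and> k1 \<noteq> x"
      using eq_unreferenced[OF _ h, of x s' t'] eq_unreferenced[of x s' t' y l p1 j1 u1 p2 k1 r] by auto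
  qed
qed

lemma (in recording_inv) delete_preserves:
  assumes e: "(i, s, s) \<in> E" and h: "HE i s o1 j v o2 k s \<in> H"
  shows "recording_inv E0 (E - {(i, s, s)}) R (H - {HE i s o1 j v o2 k s})"
    (is "recording_inv E0 ?E R ?H")
proof
  show "inj_on fst (?E \<union> R)" using idx_inj by (rule inj_on_subset) auto
  show "fst ` ?E \<inter> fst ` R = {}" using idx_disjoint by auto
next
  fix x l r assume "(x, l, r) \<in> ?E \<union> R" "x \<in> fst ` E0"
  then show "(x, l, r) \<in> E0 \<or> (x, r, l) \<in> E0" using E0_idx[of x l r] by blast
next
  fix x l r assume a: "(x, l, r) \<in> ?E \<union> R" "x \<notin> fst ` E0"
  have iR: "i \<notin> fst ` R" using idx_disjoint e by force
  then have other: "(x, l, r) \<in> E \<union> R - {(i, s, s)}" using a(1) by force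
  then have "x \<noteq> i" using idx_ne_if_other e by blast
  with recorded[OF DiffD1[OF other] a(2)] show "\<exists>o1 j u o2 k. HE x l o1 j u o2 k r \<in> ?H" by blast
next
  fix y l p1 j1 u1 p2 k1 r assume a: "HE y l p1 j1 u1 p2 k1 r \<in> ?H" "y \<notin> fst ` E0"
  then have hH: "HE y l p1 j1 u1 p2 k1 r \<in> H" by auto
  have old: "justified E0 H l p1 j1 u1" "justified E0 H u1 p2 k1 r" "j1 < y" "k1 < y"
    using hist_justified[OF hH a(2)] by auto
  moreover have "j1 \<noteq> i \<and> k1 \<noteq> i"
    using old eq_unreferenced[OF e hH] by (cases "y = i") auto
  ultimately show "justified E0 ?H l p1 j1 u1 \<and> justified E0 ?H u1 p2 k1 r \<and> j1 < y \<and> k1 < y"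
    using justified_remove by blast
next
  fix x s' t' y l p1 j1 u1 p2 k1 r
  assume "(x, s', t') \<in> ?E" "HE y l p1 j1 u1 p2 k1 r \<in> ?H" "y \<noteq> x"
  then show "j1 \<noteq> x \<and> k1 \<noteq> x" using eq_unreferenced[of x s' t' y l p1 j1 u1 p2 k1 r] by auto
qed

lemma (in recording_inv) cstep_preserves:
  assumes "cstep gt m (E, R, H) (E', R', H')"
    and "\<forall>x \<in> used_idxs (E, R, H). x < m" "\<forall>x \<in> fst ` E0. x < m"
  shows "recording_inv E0 E' R' H'"
  using assms(1)
proof (cases rule: cstep.cases)
  case deduce then show ?thesis using deduce_preserves[OF assms(2,3)] by blast
next
  case orient_left then show ?thesis using orient_left_preserves by blast
next
  case orient_right then show ?thesis using orient_right_preserves by blast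
next
  case simplify_left then show ?thesis using simplify_left_preserves[OF assms(2,3)] by blast
next
  case simplify_right then show ?thesis using simplify_right_preserves[OF assms(2,3)] by blast
next
  case delete then show ?thesis using delete_preserves by blast
next
  case compose then show ?thesis using compose_preserves[OF assms(2,3)] by blast
next
  case collapse then show ?thesis using collapse_preserves[OF assms(2,3)] by blast
qed

lemma recording_inv_init:
  assumes "init_eqs E E0"
  shows "recording_inv E0 E0 {} (init_hist E0)"
proof
  show "inj_on fst (E0 \<union> {})" using assms unfolding init_eqs_def by simp
next
  fix i s t x l o1 j u o2 k r
  assume "(i, s, t) \<in> E0" "HE x l o1 j u o2 k r \<in> init_hist E0" "x \<noteq> i"
  then show "j \<noteq> i \<and> k \<noteq> i" using assms unfolding init_eqs_def init_hist_def by force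
qed (auto simp: image_iff init_hist_def)

lemma recording_inv_run:
  assumes "init_eqs E E0" "run gt E0 ss" "n < length ss"
  shows "recording_inv E0 (fst (ss ! n)) (fst (snd (ss ! n))) (snd (snd (ss ! n)))"
  using assms(3)
proof (induction n)
  case 0
  then show ?case using assms(2) recording_inv_init[OF assms(1)] unfolding run_def by auto
next
  case (Suc n)
  obtain m where m: "\<forall>l \<le> n. \<forall>x \<in> used_idxs (ss ! l). x < m" "cstep gt m (ss ! n) (ss ! Suc n)"
    using assms(2) Suc.prems unfolding run_def by (metis Suc_lessE diff_Suc_1)
  obtain E R H where sn: "ss ! n = (E, R, H)" by (cases "ss ! n") auto
  obtain E' R' H' where sn': "ss ! Suc n = (E', R', H')" by (cases "ss ! Suc n") auto
  have "\<forall>x \<in> used_idxs (E, R, H). x < m" using m(1)[rule_format, of n] sn by simp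
  moreover have "\<forall>x \<in> fst ` E0. x < m"
    using m(1)[rule_format, of 0] assms(2) unfolding run_def by auto
  moreover have "recording_inv E0 E R H" using Suc sn by auto
  ultimately show ?case using recording_inv.cstep_preserves m(2) sn sn' by fastforce
qed

lemma conv_last_append: "conv_last s (xs @ ys) = conv_last (conv_last s xs) ys"
  by (induction s xs rule: conv_last.induct) auto

lemma conv_steps_append: "conv_steps s (xs @ ys) = conv_steps s xs @ conv_steps (conv_last s xs) ys"
  by (induction s xs rule: conv_steps.induct) auto

lemma conv_steps_memD:
  "st \<in> set (conv_steps s xs) \<Longrightarrow> \<exists>pre d i b post. xs = pre @ (d, i, b) # post \<and> st = (conv_last s pre, d, i, b)"
proof (induction s xs rule: conv_steps.induct)
  case (2 s d i t xs)
  then consider "st = (s, d, i, t)" | "st \<in> set (conv_steps t xs)" by auto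
  then show ?case
  proof cases
    case 2
    then obtain pre d' i' b post where "xs = pre @ (d', i', b) # post" "st = (conv_last t pre, d', i', b)"
      using "2.IH" by blast
    then show ?thesis by (intro exI[of _ "(d, i, t) # pre"]) auto
  qed (intro exI[of _ "[]"], auto)
qed simp

definition justified_conv :: "('f, 'v) ieq set \<Rightarrow> ('f, 'v) hentry set \<Rightarrow> ('f, 'v) conv \<Rightarrow> bool" where
  "justified_conv E0 H c \<longleftrightarrow> (\<forall>(a, d, i, b) \<in> set (conv_steps (fst c) (snd c)). justified E0 H a d i b)"

definition idx_weight :: "('f, 'v) conv \<Rightarrow> nat" where
  "idx_weight c = (\<Sum>(d, i, t) \<leftarrow> snd c. 3 ^ i)"

lemma pow3_add_less: "j < i \<Longrightarrow> k < i \<Longrightarrow> (3::nat) ^ j + 3 ^ k < 3 ^ i"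
proof -
  assume "j < i" "k < i"
  then have "(3::nat) ^ j \<le> 3 ^ (i - 1)" "(3::nat) ^ k \<le> 3 ^ (i - 1)" by (auto intro: power_increasing)
  moreover have "(3::nat) ^ i = 3 * 3 ^ (i - 1)" using \<open>j < i\<close> by (cases i) auto
  moreover have "(0::nat) < 3 ^ (i - 1)" by simp
  ultimately show ?thesis by linarith
qed

lemma (in recording_inv) recall_step_preserves:
  assumes st: "recall_step (fst ` E0) H c c'"
  shows "fst c' = fst c \<and> conv_end c' = conv_end c \<and>
    (justified_conv E0 H c \<longrightarrow> justified_conv E0 H c') \<and> idx_weight c' < idx_weight c"
proof -
  obtain pre d i t2 post l o1 j u o2 k r p \<sigma> where
    f: "fst c' = fst c" and sc: "snd c = pre @ (d, i, t2) # post" and iI: "i \<notin> fst ` E0"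
    and h: "HE i l o1 j u o2 k r \<in> H"
    and cs: "(d = Fw \<and> is_pos (conv_last (fst c) pre) p \<and> subt_at (conv_last (fst c) pre) p = subst l \<sigma> \<and>
             t2 = replace_at (conv_last (fst c) pre) p (subst r \<sigma>) \<and>
             snd c' = pre @ (o1, j, replace_at (conv_last (fst c) pre) p (subst u \<sigma>)) # (o2, k, t2) # post)
        \<or> (d = Bw \<and> is_pos t2 p \<and> subt_at t2 p = subst l \<sigma> \<and>
             conv_last (fst c) pre = replace_at t2 p (subst r \<sigma>) \<and>
             snd c' = pre @ (inv_dir o2, k, replace_at t2 p (subst u \<sigma>)) # (inv_dir o1, j, t2) # post)"
    using st unfolding recall_step_def Let_def by blast
  define t1 where "t1 = conv_last (fst c) pre"
  have old: "justified E0 H l o1 j u" "justified E0 H u o2 k r" "j < i" "k < i"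
    using hist_justified[OF h iI] by auto
  have "idx_weight c' < idx_weight c"
    using cs pow3_add_less[OF old(3,4)] unfolding idx_weight_def sc by auto
  moreover from cs consider
    (F) "is_pos t1 p" "subt_at t1 p = subst l \<sigma>" "t2 = replace_at t1 p (subst r \<sigma>)"
        "snd c' = pre @ (o1, j, replace_at t1 p (subst u \<sigma>)) # (o2, k, t2) # post"
  | (B) "is_pos t2 p" "subt_at t2 p = subst l \<sigma>" "t1 = replace_at t2 p (subst r \<sigma>)"
        "snd c' = pre @ (inv_dir o2, k, replace_at t2 p (subst u \<sigma>)) # (inv_dir o1, j, t2) # post"
    unfolding t1_def by blast
  then have "conv_end c' = conv_end c \<and> (justified_conv E0 H c \<longrightarrow> justified_conv E0 H c')"
  proof cases
    case F
    have "replace_at t1 p (subst l \<sigma>) = t1" using replace_at_subt_at[OF F(1)] F(2) by simp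
    then have "justified E0 H t1 o1 j (replace_at t1 p (subst u \<sigma>))"
      "justified E0 H (replace_at t1 p (subst u \<sigma>)) o2 k t2"
      using justified_ctxt_subst[OF old(1) F(1), of \<sigma>] justified_ctxt_subst[OF old(2) F(1), of \<sigma>] F(3)
      by simp_all
    then show ?thesis using f F(4) sc unfolding justified_conv_def conv_end_def
      by (simp add: conv_steps_append conv_last_append t1_def[symmetric])
  next
    case B
    have "replace_at t2 p (subst l \<sigma>) = t2" using replace_at_subt_at[OF B(1)] B(2) by simp
    then have "justified E0 H t2 o1 j (replace_at t2 p (subst u \<sigma>))"
      "justified E0 H (replace_at t2 p (subst u \<sigma>)) o2 k t1"
      using justified_ctxt_subst[OF old(1) B(1), of \<sigma>] justified_ctxt_subst[OF old(2) B(1), of \<sigma>] B(3)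
      by simp_all
    then have "justified E0 H t1 (inv_dir o2) k (replace_at t2 p (subst u \<sigma>))"
      "justified E0 H (replace_at t2 p (subst u \<sigma>)) (inv_dir o1) j t2"
      using justified_inv_dir by metis+
    then show ?thesis using f B(4) sc unfolding justified_conv_def conv_end_def
      by (simp add: conv_steps_append conv_last_append t1_def[symmetric])
  qed
  ultimately show ?thesis using f by blast
qed

lemma recall_step_exists:
  assumes "snd c = pre @ (d, i, b) # post" and "i \<notin> I" and "HE i l o1 j u o2 k r \<in> H"
    and "(d = Fw \<and> rstep (l, r) (conv_last (fst c) pre) b) \<or> (d = Bw \<and> rstep (l, r) b (conv_last (fst c) pre))"
  shows "\<exists>c'. recall_step I H c c'"
  using assms(4)
proof
  assume "d = Fw \<and> rstep (l, r) (conv_last (fst c) pre) b"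
  then obtain p \<sigma> where "d = Fw" "is_pos (conv_last (fst c) pre) p"
    "subt_at (conv_last (fst c) pre) p = subst l \<sigma>" "b = replace_at (conv_last (fst c) pre) p (subst r \<sigma>)"
    unfolding rstep_def by auto
  then have "recall_step I H c
      (fst c, pre @ (o1, j, replace_at (conv_last (fst c) pre) p (subst u \<sigma>)) # (o2, k, b) # post)"
    using assms(1-3) unfolding recall_step_def Let_def by fastforce
  then show ?thesis by blast
next
  assume "d = Bw \<and> rstep (l, r) b (conv_last (fst c) pre)"
  then obtain p \<sigma> where "d = Bw" "is_pos b p"
    "subt_at b p = subst l \<sigma>" "conv_last (fst c) pre = replace_at b p (subst r \<sigma>)"
    unfolding rstep_def by auto
  then have "recall_step I H c
      (fst c, pre @ (inv_dir o2, k, replace_at b p (subst u \<sigma>)) # (inv_dir o1, j, b) # post)"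
    using assms(1-3) unfolding recall_step_def Let_def by fastforce
  then show ?thesis by blast
qed

lemma recall_normal_form_E_step:
  assumes "justified_conv E0 H c" and "\<not> (\<exists>c'. recall_step (fst ` E0) H c c')"
    and st: "st \<in> set (conv_steps (fst c) (snd c))"
  shows "E_step E0 st"
proof -
  obtain pre d i b post where sc: "snd c = pre @ (d, i, b) # post"
    and st_eq: "st = (conv_last (fst c) pre, d, i, b)"
    using conv_steps_memD[OF st] by blast
  have just: "justified E0 H (conv_last (fst c) pre) d i b"
    using assms(1) st st_eq unfolding justified_conv_def by auto
  show ?thesis
  proof (rule ccontr)
    assume "\<not> E_step E0 st"
    then obtain l o1 j u o2 k r where "i \<notin> fst ` E0" "HE i l o1 j u o2 k r \<in> H"
      "(d = Fw \<and> rstep (l, r) (conv_last (fst c) pre) b) \<or> (d = Bw \<and> rstep (l, r) b (conv_last (fst c) pre))"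
      using just unfolding st_eq justified_def by auto
    with recall_step_exists[OF sc] assms(2) show False by blast
  qed
qed

lemma (in recording_inv) join_justified: "is_join R s t c \<Longrightarrow> justified_conv E0 H c"
  unfolding is_join_def justified_conv_def using rstep_idx_justified by fastforce

theorem lemma2:
  fixes gt :: "('f, 'v) trm \<Rightarrow> ('f, 'v) trm \<Rightarrow> bool"
    and E :: "(('f, 'v) trm \<times> ('f, 'v) trm) set"
    and E0 En R :: "('f, 'v) ieq set"
    and Hn :: "('f, 'v) hentry set"
    and ss :: "('f, 'v) state list"
    and s t :: "('f, 'v) trm"
    and c0 :: "('f, 'v) conv"
  assumes "infinite (UNIV :: 'v set)"
    and "reduction_order gt"
    and "init_eqs E E0"
    and "run gt E0 ss"
    and "last ss = (En, R, Hn)"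
    and "is_join R s t c0"
  shows "\<not> (\<exists>f. f 0 = c0 \<and> (\<forall>n. recall_step (fst ` E0) Hn (f n) (f (Suc n)))) \<and>
         (\<forall>c. (recall_step (fst ` E0) Hn)\<^sup>*\<^sup>* c0 c \<and> \<not> (\<exists>c'. recall_step (fst ` E0) Hn c c') \<longrightarrow>
           fst c = s \<and> conv_end c = t \<and>
           (\<forall>st \<in> set (conv_steps (fst c) (snd c)). E_step E0 st))"
proof -
  have "ss \<noteq> []" using assms(4) unfolding run_def by blast
  then have I: "recording_inv E0 En R Hn"
    using recording_inv_run[OF assms(3,4), of "length ss - 1"] assms(5) by (simp add: last_conv_nth)
  have "\<nexists>f. \<forall>n. recall_step (fst ` E0) Hn (f n) (f (Suc n))"
  proof
    assume "\<exists>f. \<forall>n. recall_step (fst ` E0) Hn (f n) (f (Suc n))"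
    then obtain f where f: "\<And>n. recall_step (fst ` E0) Hn (f n) (f (Suc n))" by blast
    have "(f (Suc n), f n) \<in> measure idx_weight" for n
      using recording_inv.recall_step_preserves[OF I f[of n]] by simp
    then show False using wf_iff_no_infinite_down_chain wf_measure by blast
  qed
  moreover have "fst c = s \<and> conv_end c = t \<and> justified_conv E0 Hn c"
    if "(recall_step (fst ` E0) Hn)\<^sup>*\<^sup>* c0 c" for c
    using that
  proof (induction rule: rtranclp_induct)
    case base
    then show ?case using assms(6) recording_inv.join_justified[OF I] unfolding is_join_def by blast
  next
    case (step y z)
    then show ?case using recording_inv.recall_step_preserves[OF I step(2)] by auto
  qed
  ultimately show ?thesis using recall_normal_form_E_step by blast
qed

end
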